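(* Let $A=\mathbb{C}[x_1,x_2,\dots]$ with $x_i$ of degree $i$, and let $d$ be the derivation with $dx_1=0$, $dx_i=x_{i-1}$ ($i>1$), extended termwise to formal power series in the $x_i$. Let $n\ge\ell\ge1$ and $\beta=(\beta_1,\dots,\beta_\ell)\in B^{(\ell)}_n(0)$, and for $i\ge0$ put $\beta(i)=(\beta_1+i,\beta_2,\dots,\beta_\ell)\in B^{(\ell)}_{n+i}(i)$. Then the formal power series $$\tilde g_\beta(\vec x)=\sum_{i\ge0} g_{\beta(i)}(\vec x)=g_\beta(\vec x)+g_{\beta(1)}(\vec x)+g_{\beta(2)}(\vec x)+\cdots$$ is a lift of $g_\beta(\vec x)\in J_n$, i.e. its lowest-degree part is $g_\beta(\vec x)$ and $d\,\tilde g_\beta=\tilde g_\beta$.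
   Context: $J=\mathrm{Ker}(d)\subset A$ and $J_n$ is its degree-$n$ part. For $n\ge\ell\ge1$, $B^{(\ell)}_n=\{\beta\in\mathbb{Z}^\ell:\beta_1,\dots,\beta_{\ell-1}\ge0,\ \beta_\ell\ge1,\ \beta_1+2\beta_2+\cdots+\ell\beta_\ell=n\}$. For $i\ge0$ and $n\ge\ell>1$, $B^{(\ell)}_n(i)=\{\beta\in B^{(\ell)}_n:\beta_1=i\}$; for $\ell=1$, $B^{(1)}_n(i)=\{(i+1)\}$ if $n=i+1$ and $\emptyset$ otherwise. For $\vec k=(k_1,\dots,k_\ell)$, $e^\beta(\vec k)=e_1(\vec k)^{\beta_1}\cdots e_\ell(\vec k)^{\beta_\ell}$ with $e_j$ the elementary symmetric polynomials, and $g_\beta(\vec x)\in A$ for $\beta\in B^{(\ell)}_n$ is defined by $$\sum_{\substack{i_1,\dots,i_\ell\ge1\\ i_1+\cdots+i_\ell=n}} k_1^{i_1}\cdots k_\ell^{i_\ell}x_{i_1}\cdots x_{i_\ell}=\sum_{\beta\in B^{(\ell)}_n} e^\beta(k_1,\dots,k_\ell)\,g_\beta(\vec x).$$ A lift of $f\in J_n$ ($n>0$) is a formal power series $F=f+(\text{terms of degree}>n)$ in $x_1,x_2,\dots$ with $dF=F$. *)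

theory Defs
  imports Complex_Main "HOL-Library.Multiset"
begin

text \<open>A monomial x_{i_1} ... x_{i_r} is represented by the multiset {#i_1, ..., i_r#};
  a formal power series is its coefficient function. Only monomials in the variables
  with positive index are meaningful (see valid_series). Polynomials (elements of A)
  are series with finite support.\<close>

type_synonym xseries = "nat multiset \<Rightarrow> complex"

definition deg :: "nat multiset \<Rightarrow> nat" where
  "deg m = sum_mset m"

definition valid_series :: "xseries \<Rightarrow> bool" where
  "valid_series F \<longleftrightarrow> (\<forall>m. 0 \<in># m \<longrightarrow> F m = 0)"

text \<open>On a monomial, d x^m = sum over i in m with i>1 of (count m i) x^{m - i + (i-1)}.
  Hence the coefficient of the monomial m' in dF collects, for every j \<ge> 1 occurring
  in m', the contribution of the monomial m' - {#j#} + {#j+1#}.\<close>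

definition dop :: "xseries \<Rightarrow> xseries" where
  "dop F m' = (\<Sum>j\<in>set_mset m' - {0}.
      of_nat (count m' (Suc j) + 1) * F (m' - {#j#} + {#Suc j#}))"

definition J_deg :: "nat \<Rightarrow> xseries set" where
  "J_deg n = {f. valid_series f \<and> finite {m. f m \<noteq> 0}
                 \<and> (\<forall>m. f m \<noteq> 0 \<longrightarrow> deg m = n) \<and> dop f = (\<lambda>_. 0)}"

definition is_lift :: "nat \<Rightarrow> xseries \<Rightarrow> xseries \<Rightarrow> bool" where
  "is_lift n f F \<longleftrightarrow> 0 < n \<and> f \<in> J_deg n \<and> valid_series F
      \<and> (\<forall>m. deg m \<le> n \<longrightarrow> F m = f m) \<and> dop F = F"

text \<open>B^(l)_n: beta = (beta_1,...,beta_l) as a list (beta_j = beta!(j-1)).\<close>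

definition Bset :: "nat \<Rightarrow> nat \<Rightarrow> nat list set" where
  "Bset l n = {\<beta>. length \<beta> = l \<and> 1 \<le> l \<and> 1 \<le> \<beta> ! (l - 1)
                  \<and> (\<Sum>j<l. (j + 1) * \<beta> ! j) = n}"

definition Bi :: "nat \<Rightarrow> nat \<Rightarrow> nat \<Rightarrow> nat list set" where
  "Bi l n i = (if l = 1 then (if n = i + 1 then {[i + 1]} else {})
               else {\<beta> \<in> Bset l n. \<beta> ! 0 = i})"

definition esym :: "nat \<Rightarrow> complex list \<Rightarrow> complex" where
  "esym j k = (\<Sum>S\<in>{S. S \<subseteq> {..<length k} \<and> card S = j}. \<Prod>s\<in>S. k ! s)"

definition epow :: "nat list \<Rightarrow> complex list \<Rightarrow> complex" where
  "epow \<beta> k = (\<Prod>j<length \<beta>. esym (j + 1) k ^ (\<beta> ! j))"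

definition comps :: "nat \<Rightarrow> nat \<Rightarrow> nat list set" where
  "comps l n = {c. length c = l \<and> (\<forall>x\<in>set c. 1 \<le> x) \<and> sum_list c = n}"

text \<open>Coefficient of the x-monomial m in the left-hand side of the generating identity,
  evaluated at k.\<close>

definition lhs_coeff :: "nat \<Rightarrow> nat \<Rightarrow> complex list \<Rightarrow> nat multiset \<Rightarrow> complex" where
  "lhs_coeff l n k m = (\<Sum>c\<in>{c \<in> comps l n. mset c = m}. \<Prod>j<l. (k ! j) ^ (c ! j))"

text \<open>The family (g_beta)_{beta \<in> B^(l)_n} is characterised by the identity
  sum_{i} k^i x_{i_1}...x_{i_l} = sum_beta e^beta(k) g_beta(x), an identity of polynomials
  in k (equivalently, for all complex values of k_1,...,k_l), compared coefficientwise in x.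
  We set g_beta = 0 for beta outside B^(l)_n to make the family unique.\<close>

definition gfam_ok :: "nat \<Rightarrow> nat \<Rightarrow> (nat list \<Rightarrow> xseries) \<Rightarrow> bool" where
  "gfam_ok l n G \<longleftrightarrow> (\<forall>\<beta>. \<beta> \<notin> Bset l n \<longrightarrow> G \<beta> = (\<lambda>_. 0))
     \<and> (\<forall>k m. length k = l \<longrightarrow>
          lhs_coeff l n k m = (\<Sum>\<beta>\<in>Bset l n. epow \<beta> k * G \<beta> m))"

definition g :: "nat \<Rightarrow> nat \<Rightarrow> nat list \<Rightarrow> xseries" where
  "g l n \<beta> = (THE G. gfam_ok l n G) \<beta>"

definition beta_shift :: "nat list \<Rightarrow> nat \<Rightarrow> nat list" where
  "beta_shift \<beta> i = (case \<beta> of [] \<Rightarrow> [] | b # bs \<Rightarrow> (b + i) # bs)"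

definition gtilde :: "nat \<Rightarrow> nat \<Rightarrow> nat list \<Rightarrow> xseries" where
  "gtilde l n \<beta> m = (\<Sum>i. g l (n + i) (beta_shift \<beta> i) m)"

end

theory Submission
  imports Defs "HOL-Combinatorics.Permutations" "HOL-Computational_Algebra.Fundamental_Theorem_Algebra"
begin

text \<open>Let P(k, x) = sum of k_1^i_1 ... k_l^i_l x_i_1 ... x_i_l be the generating series defining the
  g_beta. It is the product over j of (sum_i k_j^i x_i), and d multiplies each factor by k_j, so
  d P = e_1(k) P. The products e^beta(k) are linearly independent (the e_j take every tuple of
  values, by the fundamental theorem of algebra), so comparing coefficients gives d g_beta = g_beta'
  where beta' lowers beta_1 by one; for beta in B_n(0) the index beta' lies outside B_(n-1), so
  d g_beta = 0. Hence d maps each term g_beta(i+1) of the series tilde g_beta to the previous one and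
  kills g_beta, i.e. d tilde g_beta = tilde g_beta.

  That the family g_beta exists at all is the fundamental theorem on symmetric polynomials: the
  coefficient of an x-monomial in P is a symmetric polynomial in k vanishing at k_l = 0, hence e_l
  times a polynomial in e_1, ..., e_l.\<close>

section \<open>Elementary symmetric polynomials\<close>

lemma esym_0 [simp]: "esym 0 k = 1"
proof -
  have "{S. S \<subseteq> {..<length k} \<and> card S = 0} = {{}}"
    by (auto simp: card_eq_0_iff dest: finite_subset[OF _ finite_lessThan])
  then show ?thesis unfolding esym_def by simp
qed

lemma esym_eq_0: "length k < j \<Longrightarrow> esym j k = 0"
proof -
  assume "length k < j"
  then have none: "{S. S \<subseteq> {..<length k} \<and> card S = j} = {}"
    by (auto dest: card_mono[rotated, of _ "{..<length k}"])
  show ?thesis unfolding esym_def none by simp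
qed

lemma subsets_card_lessThan_Suc:
  "{S. S \<subseteq> {..<Suc n} \<and> card S = Suc j} =
   {S. S \<subseteq> {..<n} \<and> card S = Suc j} \<union> insert n ` {T. T \<subseteq> {..<n} \<and> card T = j}"
proof (intro equalityI subsetI)
  fix S assume S: "S \<in> {S. S \<subseteq> {..<Suc n} \<and> card S = Suc j}"
  then have "finite S" using finite_subset by blast
  show "S \<in> {S. S \<subseteq> {..<n} \<and> card S = Suc j} \<union> insert n ` {T. T \<subseteq> {..<n} \<and> card T = j}"
  proof (cases "n \<in> S")
    case True
    then have "S = insert n (S - {n})" "S - {n} \<subseteq> {..<n}" "card (S - {n}) = j"
      using S \<open>finite S\<close> by auto
    then show ?thesis by blast
  qed (use S in \<open>auto simp: less_Suc_eq\<close>)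
next
  fix S assume "S \<in> {S. S \<subseteq> {..<n} \<and> card S = Suc j} \<union> insert n ` {T. T \<subseteq> {..<n} \<and> card T = j}"
  then show "S \<in> {S. S \<subseteq> {..<Suc n} \<and> card S = Suc j}"
    by (auto simp: finite_subset[of _ "{..<n}"] card_insert_if)
qed

lemma esym_append_Suc: "esym (Suc j) (k @ [a]) = esym (Suc j) k + a * esym j k"
proof -
  let ?n = "length k"
  let ?A = "{S. S \<subseteq> {..<?n} \<and> card S = Suc j}"
  let ?T = "{T. T \<subseteq> {..<?n} \<and> card T = j}"
  have "finite ?A" "finite ?T" by (auto intro: finite_subset[of _ "Pow {..<?n}"])
  moreover have "inj_on (insert ?n) ?T"
    by (rule inj_onI) (metis Diff_insert_absorb lessThan_iff less_irrefl mem_Collect_eq subsetD)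
  moreover have "(\<Prod>s\<in>S. (k @ [a]) ! s) = (\<Prod>s\<in>S. k ! s)" if "S \<subseteq> {..<?n}" for S
    using that by (intro prod.cong) (auto simp: nth_append)
  moreover have "(\<Prod>s\<in>insert ?n T. (k @ [a]) ! s) = a * (\<Prod>s\<in>T. k ! s)" if "T \<in> ?T" for T
    using that calculation(4)[of T] by (subst prod.insert) (auto intro: finite_subset)
  ultimately show ?thesis
    unfolding esym_def length_append_singleton subsets_card_lessThan_Suc
    by (subst sum.union_disjoint) (auto simp: sum.reindex sum_distrib_left)
qed

lemma esym_append_0: "esym j (k @ [0]) = esym j k"
  by (cases j) (simp_all add: esym_append_Suc)

lemma esym_length: "esym (length k) k = (\<Prod>j<length k. k ! j)"
proof (induction k rule: rev_induct)
  case (snoc a k)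
  then show ?case by (simp add: esym_append_Suc esym_eq_0 nth_append mult.commute)
qed simp

lemma esym_1: "esym 1 k = (\<Sum>j<length k. k ! j)"
proof (induction k rule: rev_induct)
  case (snoc a k)
  then show ?case using esym_append_Suc[of 0 k a] by (simp add: nth_append)
qed (simp add: esym_eq_0)

lemma esym_permute_list:
  assumes p: "p permutes {..<length k}"
  shows "esym j (permute_list p k) = esym j k"
proof -
  let ?S = "{S. S \<subseteq> {..<length k} \<and> card S = j}"
  have img: "p ` S \<in> ?S" if "S \<in> ?S" "p permutes {..<length k}" for S p
    using that permutes_inj[OF that(2)] permutes_image[OF that(2)]
    by (auto simp: card_image inj_on_subset)
  have "esym j (permute_list p k) = (\<Sum>S\<in>?S. \<Prod>s\<in>p ` S. k ! s)"
    unfolding esym_def using p permutes_inj[OF p]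
    by (intro sum.cong refl) (auto simp: permute_list_nth prod.reindex inj_on_subset intro!: prod.cong)
  also have "\<dots> = esym j k"
    unfolding esym_def
    by (rule sum.reindex_bij_witness[of _ "\<lambda>T. inv p ` T" "\<lambda>S. p ` S"])
       (use p img permutes_inv[OF p] in \<open>auto simp: image_image permutes_inverses\<close>)
  finally show ?thesis .
qed

lemma coeff_prod_linear_factors:
  "coeff (\<Prod>a\<leftarrow>k. [:a, 1:]) r = (if r \<le> length k then esym (length k - r) k else 0)"
proof (induction k arbitrary: r rule: rev_induct)
  case Nil
  then show ?case by (cases r) auto
next
  case (snoc a k)
  have split: "(\<Prod>a\<leftarrow>k @ [a]. [:a, 1:]) = smult a (\<Prod>a\<leftarrow>k. [:a, 1:]) + pCons 0 (\<Prod>a\<leftarrow>k. [:a, 1:])"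
    by simp
  show ?case
  proof (cases r)
    case 0
    then show ?thesis using snoc[of 0] by (simp add: split esym_append_Suc esym_eq_0)
  next
    case (Suc r')
    have "r' < length k \<Longrightarrow> length k - r' = Suc (length k - Suc r')" by simp
    then show ?thesis using snoc[of r] snoc[of r'] Suc
      by (auto simp: split esym_append_Suc esym_eq_0 le_Suc_eq)
  qed
qed

text \<open>The e_j(k) are the coefficients of the monic polynomial with roots -k, and every monic
  polynomial splits.\<close>

lemma ex_esym_eq:
  assumes "length y = l"
  shows "\<exists>k. length k = l \<and> (\<forall>j<l. esym (j + 1) k = y ! j)"
proof -
  define p :: "complex poly" where "p = monom 1 l + (\<Sum>j<l. monom (y ! j) (l - Suc j))"
  have coeff_p: "coeff p r = (if r = l then 1 else 0) + (\<Sum>j<l. if l - Suc j = r then y ! j else 0)" for r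
    unfolding p_def by (simp add: coeff_sum coeff_monom)
  have coeff_low: "coeff p (l - Suc j) = y ! j" if "j < l" for j
  proof -
    have "(\<Sum>i<l. if l - Suc i = l - Suc j then y ! i else 0) = (\<Sum>i<l. if i = j then y ! i else 0)"
      using that by (intro sum.cong refl) auto
    then show ?thesis using coeff_p[of "l - Suc j"] that by simp
  qed
  have "(\<Sum>j<l. if l - Suc j = l then y ! j else 0) = 0" by (intro sum.neutral) auto
  then have lead: "coeff p l = 1" using coeff_p[of l] by simp
  have "coeff p r = 0" if "l < r" for r
    using coeff_p[of r] that by (auto intro: sum.neutral)
  then have "degree p = l"
    by (intro antisym degree_le le_degree) (auto simp: lead)
  moreover have "p \<noteq> 0" using lead by auto
  ultimately obtain A where A: "size A = l" "p = (\<Prod>x\<in>#A. [:-x, 1:])"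
    using alg_closed_imp_factorization[of p] lead by auto
  obtain xs where xs: "mset xs = A" using ex_mset by blast
  define k where "k = map uminus xs"
  have "p = (\<Prod>a\<leftarrow>k. [:a, 1:])"
    unfolding A(2) k_def xs[symmetric] by (simp add: prod_mset_prod_list[symmetric] o_def)
  moreover have "length k = l" unfolding k_def using A(1) xs by (metis length_map size_mset)
  ultimately show ?thesis
    using coeff_low coeff_prod_linear_factors[of k] by (intro exI[of _ k]) force
qed


definition monomial :: "nat list \<Rightarrow> complex list \<Rightarrow> complex" where
  "monomial v k = (\<Prod>j<length v. (k ! j) ^ (v ! j))"

definition incr_at :: "nat \<Rightarrow> nat list \<Rightarrow> nat list" where
  "incr_at i v = v[i := Suc (v ! i)]"

lemma length_incr_at [simp]: "length (incr_at i v) = length v"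
  by (simp add: incr_at_def)

lemma inj_on_incr_at: "inj_on (incr_at i) {v. i < length v}"
  by (rule inj_onI) (metis incr_at_def diff_Suc_1 list_update_id list_update_overwrite mem_Collect_eq nth_list_update_eq)

lemma monomial_Cons: "monomial (b # v) (t # k) = t ^ b * monomial v k"
  unfolding monomial_def by (simp only: length_Cons prod.lessThan_Suc_shift) simp

lemma monomial_mult:
  assumes "length v = length k" "length w = length k"
  shows "monomial v k * monomial w k = monomial (map2 (+) v w) k"
  unfolding monomial_def using assms by (simp add: prod.distrib[symmetric] power_add)

lemma monomial_incr_at:
  assumes "i < length v"
  shows "monomial (incr_at i v) k = k ! i * monomial v k"
proof -
  have "monomial (incr_at i v) k = (\<Prod>j<length v. (if j = i then k ! i else 1) * (k ! j) ^ (v ! j))"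
    unfolding monomial_def incr_at_def by (intro prod.cong) (auto simp: nth_list_update)
  then show ?thesis unfolding prod.distrib monomial_def using assms by (simp add: prod.delta)
qed

lemma monomial_map_Suc:
  assumes "length w = length k"
  shows "monomial (map Suc w) k = esym (length k) k * monomial w k"
  unfolding monomial_def esym_length using assms by (simp add: prod.distrib[symmetric])

lemma monomial_append_0:
  assumes "length v = Suc l" "length k = l"
  shows "monomial v (k @ [0]) = (if v ! l = 0 then monomial (take l v) k else 0)"
proof -
  have "monomial v (k @ [0]) = (\<Prod>j<l. (k ! j) ^ (v ! j)) * 0 ^ (v ! l)"
    unfolding monomial_def using assms by (simp add: nth_append)
  moreover have "monomial (take l v) k = (\<Prod>j<l. (k ! j) ^ (v ! j))"
    unfolding monomial_def using assms by simp
  ultimately show ?thesis by simp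
qed

lemma monomial_permute_list:
  assumes q: "q permutes {..<length k}" and "length v = length k"
  shows "monomial v (permute_list q k) = monomial (permute_list (inv q) v) k"
proof -
  have "monomial v (permute_list q k) = (\<Prod>j<length k. (\<lambda>i. (k ! i) ^ (v ! inv q i)) (q j))"
    unfolding monomial_def using assms by (intro prod.cong) (auto simp: permute_list_nth permutes_inverses)
  also have "\<dots> = (\<Prod>i<length k. (k ! i) ^ (v ! inv q i))"
    using permutes_imp_bij[OF q] by (rule prod.reindex_bij_betw)
  also have "\<dots> = monomial (permute_list (inv q) v) k"
    unfolding monomial_def using assms permutes_inv[OF q] by (intro prod.cong) (auto simp: permute_list_nth)
  finally show ?thesis .
qed

lemma sum_monomial_permute_list:
  assumes "finite V" "\<forall>v\<in>V. length v = length k"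
    and closed: "\<And>v. v \<in> V \<Longrightarrow> permute_list q v \<in> V" "\<And>v. v \<in> V \<Longrightarrow> permute_list (inv q) v \<in> V"
    and q: "q permutes {..<length k}"
  shows "(\<Sum>v\<in>V. c v * monomial v (permute_list q k)) = (\<Sum>v\<in>V. c (permute_list q v) * monomial v k)"
proof -
  have inverse: "permute_list q (permute_list (inv q) v) = v" "permute_list (inv q) (permute_list q v) = v"
    if "v \<in> V" for v
  proof -
    have "length v = length k" using that assms(2) by simp
    then show "permute_list q (permute_list (inv q) v) = v" "permute_list (inv q) (permute_list q v) = v"
      using permute_list_compose[of q v "inv q"] permute_list_compose[of "inv q" v q]
        permutes_inv[OF q] q by (simp_all add: permutes_inv_o)
  qed
  have "(\<Sum>v\<in>V. c v * monomial v (permute_list q k)) = (\<Sum>v\<in>V. c v * monomial (permute_list (inv q) v) k)"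
    using assms by (intro sum.cong) (simp_all add: monomial_permute_list)
  also have "\<dots> = (\<Sum>v\<in>V. c (permute_list q v) * monomial v k)"
    by (rule sum.reindex_bij_witness[of _ "permute_list q" "permute_list (inv q)"])
       (use inverse closed in auto)
  finally show ?thesis .
qed

lemma sum_monomial_append_0:
  assumes "finite V" "\<forall>v\<in>V. length v = Suc l" "length k = l"
  shows "(\<Sum>v\<in>V. c v * monomial v (k @ [0])) =
         (\<Sum>u\<in>take l ` {v\<in>V. v ! l = 0}. c (u @ [0]) * monomial u k)"
proof -
  have snoc: "v = take l v @ [0]" if "v \<in> V" "v ! l = 0" for v
    using that assms(2) take_Suc_conv_app_nth[of l v] by simp
  then have "inj_on (take l) {v\<in>V. v ! l = 0}"
    by (intro inj_onI) (metis (mono_tags, lifting) mem_Collect_eq)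
  then have "(\<Sum>u\<in>take l ` {v\<in>V. v ! l = 0}. c (u @ [0]) * monomial u k) =
             (\<Sum>v\<in>{v\<in>V. v ! l = 0}. c v * monomial (take l v) k)"
    using snoc by (simp add: sum.reindex)
  also have "\<dots> = (\<Sum>v\<in>V. if v ! l = 0 then c v * monomial (take l v) k else 0)"
    using assms(1) by (simp add: sum.inter_filter)
  also have "\<dots> = (\<Sum>v\<in>V. c v * monomial v (k @ [0]))"
    using assms by (intro sum.cong) (simp_all add: monomial_append_0)
  finally show ?thesis ..
qed

lemma sum_powers_eq_0_imp_eq_0:
  fixes C :: "nat \<Rightarrow> complex"
  assumes "finite A" "\<forall>t. (\<Sum>a\<in>A. C a * t ^ a) = 0" "a \<in> A"
  shows "C a = 0"
proof -
  define p where "p = (\<Sum>b\<in>A. monom (C b) b)"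
  have "\<forall>t. poly p t = 0" using assms(2) by (simp add: p_def poly_sum poly_monom)
  then have "coeff p a = 0" using poly_all_0_iff_0 by (metis coeff_0)
  then show ?thesis unfolding p_def coeff_sum using assms by (simp add: coeff_monom sum.delta)
qed

lemma sum_monomial_Cons:
  assumes "finite V" "[] \<notin> V"
  shows "(\<Sum>v\<in>V. c v * monomial v (t # k)) =
    (\<Sum>b\<in>hd ` V. (\<Sum>u\<in>tl ` {v\<in>V. hd v = b}. c (b # u) * monomial u k) * t ^ b)"
proof -
  have Cons_tl: "v = b # tl v" if "v \<in> V" "hd v = b" for v b
    using that assms(2) by (cases v) auto
  have "(\<Sum>u\<in>tl ` {v\<in>V. hd v = b}. c (b # u) * monomial u k) * t ^ b =
      (\<Sum>v\<in>{v\<in>V. hd v = b}. c v * monomial v (t # k))" for b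
  proof -
    have "inj_on tl {v\<in>V. hd v = b}"
    proof (rule inj_onI)
      fix x y assume "x \<in> {v\<in>V. hd v = b}" "y \<in> {v\<in>V. hd v = b}" "tl x = tl y"
      then show "x = y" using Cons_tl[of x b] Cons_tl[of y b] by simp
    qed
    then have "(\<Sum>u\<in>tl ` {v\<in>V. hd v = b}. c (b # u) * monomial u k) * t ^ b =
        (\<Sum>v\<in>{v\<in>V. hd v = b}. c (b # tl v) * monomial (tl v) k * t ^ b)"
      by (simp add: sum.reindex sum_distrib_right)
    also have "\<dots> = (\<Sum>v\<in>{v\<in>V. hd v = b}. c v * monomial v (t # k))"
    proof (intro sum.cong refl)
      fix v assume "v \<in> {v\<in>V. hd v = b}"
      then obtain u where "v = b # u" using Cons_tl by blast
      then show "c (b # tl v) * monomial (tl v) k * t ^ b = c v * monomial v (t # k)"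
        by (simp add: monomial_Cons)
    qed
    finally show ?thesis .
  qed
  then show ?thesis using assms(1) by (simp add: sum.image_gen[of V _ hd])
qed

lemma monomial_independent:
  assumes "finite V" "\<forall>v\<in>V. length v = l"
    and "\<forall>k. length k = l \<longrightarrow> (\<Sum>v\<in>V. c v * monomial v k) = 0" and "v \<in> V"
  shows "c v = 0"
  using assms
proof (induction l arbitrary: V c v)
  case 0
  then have "V = {[]}" by auto
  with 0 show ?case by (simp add: monomial_def)
next
  case (Suc l)
  obtain a v' where v: "v = a # v'" using Suc.prems(2,4) by (cases v) auto
  define tails where "tails b = tl ` {v\<in>V. hd v = b}" for b
  have "[] \<notin> V" using Suc.prems(2) by auto
  have "a \<in> hd ` V" using Suc.prems(4) v by force
  have "(\<Sum>u\<in>tails a. c (a # u) * monomial u k) = 0" if "length k = l" for k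
  proof (rule sum_powers_eq_0_imp_eq_0[of "hd ` V" "\<lambda>b. \<Sum>u\<in>tails b. c (b # u) * monomial u k"])
    show "\<forall>t. (\<Sum>b\<in>hd ` V. (\<Sum>u\<in>tails b. c (b # u) * monomial u k) * t ^ b) = 0"
      using Suc.prems(3) that unfolding tails_def
      by (simp flip: sum_monomial_Cons[OF Suc.prems(1) \<open>[] \<notin> V\<close>])
  qed (use Suc.prems(1) \<open>a \<in> hd ` V\<close> in auto)
  moreover have "v' \<in> tails a" unfolding tails_def using Suc.prems(4) v by force
  moreover have "finite (tails a)" "\<forall>u\<in>tails a. length u = l"
    unfolding tails_def using Suc.prems(1,2) by auto
  ultimately show ?case using Suc.IH[of "tails a" "\<lambda>u. c (a # u)" v'] v by blast
qed


section \<open>Homogeneous and symmetric polynomial functions\<close>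

text \<open>A polynomial in k_1, ..., k_l is identified with the function it induces on complex lists of
  length l; by monomial_independent its coefficients can be recovered.\<close>

definition exponents :: "nat \<Rightarrow> nat \<Rightarrow> nat list set" where
  "exponents l d = {v. length v = l \<and> sum_list v = d}"

definition hom_poly_fun :: "nat \<Rightarrow> nat \<Rightarrow> (complex list \<Rightarrow> complex) \<Rightarrow> bool" where
  "hom_poly_fun l d f \<longleftrightarrow>
     (\<exists>c. \<forall>k. length k = l \<longrightarrow> f k = (\<Sum>v\<in>exponents l d. c v * monomial v k))"

definition symmetric_fun :: "nat \<Rightarrow> (complex list \<Rightarrow> complex) \<Rightarrow> bool" where
  "symmetric_fun l f \<longleftrightarrow> (\<forall>k p. length k = l \<longrightarrow> p permutes {..<l} \<longrightarrow> f (permute_list p k) = f k)"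

lemma finite_exponents: "finite (exponents l d)"
  by (rule finite_subset[of _ "{v. set v \<subseteq> {..d} \<and> length v = l}"])
     (auto simp: exponents_def intro: finite_lists_length_eq dest: member_le_sum_list)

lemma length_exponents: "v \<in> exponents l d \<Longrightarrow> length v = l"
  by (simp add: exponents_def)

lemma sum_list_permute_list:
  "q permutes {..<length v} \<Longrightarrow> sum_list (permute_list q v) = sum_list (v :: nat list)"
  by (metis mset_permute_list sum_mset_sum_list)

lemma permute_list_in_exponents:
  "q permutes {..<l} \<Longrightarrow> v \<in> exponents l d \<Longrightarrow> permute_list q v \<in> exponents l d"
  unfolding exponents_def by (simp add: sum_list_permute_list)

lemma sum_extend_by_zero:
  fixes c t :: "'a \<Rightarrow> complex"
  assumes "finite W" "V \<subseteq> W"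
  shows "(\<Sum>v\<in>V. c v * t v) = (\<Sum>v\<in>W. (if v \<in> V then c v else 0) * t v)"
proof -
  have "(\<Sum>v\<in>W. (if v \<in> V then c v else 0) * t v) = (\<Sum>v\<in>W. if v \<in> V then c v * t v else 0)"
    by (intro sum.cong) auto
  also have "\<dots> = (\<Sum>v\<in>W \<inter> V. c v * t v)"
    using assms(1) by (simp add: sum.inter_restrict)
  finally have "(\<Sum>v\<in>W. (if v \<in> V then c v else 0) * t v) = (\<Sum>v\<in>W \<inter> V. c v * t v)" .
  then show ?thesis using assms(2) by (simp add: Int_absorb1)
qed

lemma hom_poly_funI:
  assumes "V \<subseteq> exponents l d" "\<And>k. length k = l \<Longrightarrow> f k = (\<Sum>v\<in>V. c v * monomial v k)"
  shows "hom_poly_fun l d f"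
proof -
  have "f k = (\<Sum>v\<in>exponents l d. (if v \<in> V then c v else 0) * monomial v k)" if "length k = l" for k
    using assms(2)[OF that] sum_extend_by_zero[OF finite_exponents assms(1), of c "\<lambda>v. monomial v k"]
    by simp
  then show ?thesis unfolding hom_poly_fun_def
    by (intro exI[of _ "\<lambda>v. if v \<in> V then c v else 0"] allI impI)
qed

lemma hom_poly_fun_add:
  "hom_poly_fun l d f \<Longrightarrow> hom_poly_fun l d h \<Longrightarrow> hom_poly_fun l d (\<lambda>k. f k + h k)"
proof -
  assume "hom_poly_fun l d f" "hom_poly_fun l d h"
  then obtain c1 c2 where
    "\<forall>k. length k = l \<longrightarrow> f k = (\<Sum>v\<in>exponents l d. c1 v * monomial v k)"
    "\<forall>k. length k = l \<longrightarrow> h k = (\<Sum>v\<in>exponents l d. c2 v * monomial v k)"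
    unfolding hom_poly_fun_def by blast
  then show ?thesis unfolding hom_poly_fun_def
    by (intro exI[of _ "\<lambda>v. c1 v + c2 v"]) (simp add: distrib_right sum.distrib)
qed

lemma hom_poly_fun_smult: "hom_poly_fun l d f \<Longrightarrow> hom_poly_fun l d (\<lambda>k. a * f k)"
proof -
  assume "hom_poly_fun l d f"
  then obtain c where "\<forall>k. length k = l \<longrightarrow> f k = (\<Sum>v\<in>exponents l d. c v * monomial v k)"
    unfolding hom_poly_fun_def by blast
  then show ?thesis unfolding hom_poly_fun_def
    by (intro exI[of _ "\<lambda>v. a * c v"]) (simp add: sum_distrib_left mult.assoc)
qed

lemma hom_poly_fun_diff:
  "hom_poly_fun l d f \<Longrightarrow> hom_poly_fun l d h \<Longrightarrow> hom_poly_fun l d (\<lambda>k. f k - h k)"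
proof -
  assume "hom_poly_fun l d f" "hom_poly_fun l d h"
  then have "hom_poly_fun l d (\<lambda>k. f k + (-1) * h k)"
    by (intro hom_poly_fun_add hom_poly_fun_smult)
  then show ?thesis by simp
qed

lemma hom_poly_fun_sum:
  "finite I \<Longrightarrow> (\<And>i. i \<in> I \<Longrightarrow> hom_poly_fun l d (f i)) \<Longrightarrow> hom_poly_fun l d (\<lambda>k. \<Sum>i\<in>I. f i k)"
proof (induction I rule: finite_induct)
  case empty
  show ?case by (rule hom_poly_funI[of "{}"]) auto
qed (simp add: hom_poly_fun_add)

lemma hom_poly_fun_1: "hom_poly_fun l 0 (\<lambda>k. 1)"
  by (rule hom_poly_funI[of "{replicate l 0}" _ _ "\<lambda>_. 1"]) (auto simp: exponents_def monomial_def)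

lemma hom_poly_fun_mult:
  assumes "hom_poly_fun l a f" "hom_poly_fun l b h"
  shows "hom_poly_fun l (a + b) (\<lambda>k. f k * h k)"
proof -
  obtain c1 c2 where
    f: "\<And>k. length k = l \<Longrightarrow> f k = (\<Sum>v\<in>exponents l a. c1 v * monomial v k)" and
    h: "\<And>k. length k = l \<Longrightarrow> h k = (\<Sum>v\<in>exponents l b. c2 v * monomial v k)"
    using assms unfolding hom_poly_fun_def by blast
  define P where "P = exponents l a \<times> exponents l b"
  define add where "add x = map2 (+) (fst x) (snd x)" for x :: "nat list \<times> nat list"
  define c where "c u = (\<Sum>x\<in>{x\<in>P. add x = u}. c1 (fst x) * c2 (snd x))" for u
  have fin: "finite P" unfolding P_def using finite_exponents by simp
  show ?thesis
  proof (rule hom_poly_funI)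
    have "length v = length w \<Longrightarrow> sum_list (map2 (+) v w) = sum_list v + sum_list w" for v w :: "nat list"
      by (induction v w rule: list_induct2) auto
    then show "add ` P \<subseteq> exponents l (a + b)" by (auto simp: P_def add_def exponents_def)
    fix k :: "complex list" assume k: "length k = l"
    have "f k * h k = (\<Sum>x\<in>P. c1 (fst x) * c2 (snd x) * monomial (add x) k)"
      unfolding f[OF k] h[OF k] sum_product P_def sum.cartesian_product
      using k by (intro sum.cong) (auto simp: add_def exponents_def monomial_mult[symmetric] mult_ac)
    also have "\<dots> = (\<Sum>u\<in>add ` P. \<Sum>x\<in>{x\<in>P. add x = u}. c1 (fst x) * c2 (snd x) * monomial (add x) k)"
      using fin by (rule sum.image_gen)
    also have "\<dots> = (\<Sum>u\<in>add ` P. c u * monomial u k)"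
      unfolding c_def sum_distrib_right by (intro sum.cong) auto
    finally show "f k * h k = (\<Sum>u\<in>add ` P. c u * monomial u k)" .
  qed
qed

lemma hom_poly_fun_prod:
  "finite I \<Longrightarrow> (\<And>i. i \<in> I \<Longrightarrow> hom_poly_fun l (a i) (f i)) \<Longrightarrow>
    hom_poly_fun l (\<Sum>i\<in>I. a i) (\<lambda>k. \<Prod>i\<in>I. f i k)"
  by (induction I rule: finite_induct) (auto intro: hom_poly_fun_1 hom_poly_fun_mult)

lemma hom_poly_fun_power: "hom_poly_fun l a f \<Longrightarrow> hom_poly_fun l (b * a) (\<lambda>k. f k ^ b)"
  using hom_poly_fun_prod[of "{..<b}" l "\<lambda>_. a" "\<lambda>_. f"] by simp

lemma hom_poly_fun_esym: "hom_poly_fun l j (esym j)"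
proof -
  let ?S = "{S. S \<subseteq> {..<l} \<and> card S = j}"
  define \<chi> where "\<chi> S = map (\<lambda>i. if i \<in> S then 1 else 0::nat) [0..<l]" for S
  have "inj_on \<chi> ?S"
    by (rule inj_onI) (auto simp: \<chi>_def list_eq_iff_nth_eq subset_iff split: if_splits)
  moreover have "\<chi> S \<in> exponents l j" if "S \<in> ?S" for S
  proof -
    have "sum_list (\<chi> S) = card ({0..<l} \<inter> S)"
      unfolding \<chi>_def by (simp add: sum_set_upt_conv_sum_list_nat[symmetric] sum.inter_restrict[symmetric])
    then show ?thesis using that by (simp add: Int_absorb1 atLeast0LessThan exponents_def \<chi>_def)
  qed
  moreover have "monomial (\<chi> S) k = (\<Prod>s\<in>S. k ! s)" if "S \<in> ?S" "length k = l" for S k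
  proof -
    have "monomial (\<chi> S) k = (\<Prod>j\<in>{..<l} \<inter> S. k ! j)"
      unfolding monomial_def \<chi>_def prod.inter_restrict[OF finite_lessThan] by (intro prod.cong) auto
    then show ?thesis using that by (simp add: Int_absorb1)
  qed
  ultimately show ?thesis
    by (intro hom_poly_funI[of "\<chi> ` ?S" _ _ _ "\<lambda>_. 1"]) (auto simp: esym_def sum.reindex)
qed

lemma symmetric_fun_diff:
  "symmetric_fun l f \<Longrightarrow> symmetric_fun l h \<Longrightarrow> symmetric_fun l (\<lambda>k. f k - h k)"
  unfolding symmetric_fun_def by simp

lemma symmetric_fun_sum_monomial:
  assumes "V \<subseteq> exponents l d"
    and "\<And>q v. q permutes {..<l} \<Longrightarrow> v \<in> V \<Longrightarrow> permute_list q v \<in> V \<and> c (permute_list q v) = c v"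
  shows "symmetric_fun l (\<lambda>k. \<Sum>v\<in>V. c v * monomial v k)"
  unfolding symmetric_fun_def
proof (intro allI impI)
  fix k :: "complex list" and p assume k: "length k = l" and p: "p permutes {..<l}"
  have "finite V" using assms(1) finite_exponents by (rule finite_subset)
  then show "(\<Sum>v\<in>V. c v * monomial v (permute_list p k)) = (\<Sum>v\<in>V. c v * monomial v k)"
    using assms k p permutes_inv[OF p]
    by (subst sum_monomial_permute_list) (auto simp: exponents_def)
qed

lemma permute_list_append_singleton:
  assumes p: "p permutes {..<length k}"
  shows "permute_list p (k @ [a]) = permute_list p k @ [a]"
proof -
  have "p i < length k" if "i < length k" for i using permutes_in_image[OF p] that by simp
  moreover have "p (length k) = length k" using p by (rule permutes_not_in) simp
  ultimately show ?thesis by (auto simp: permute_list_def nth_append)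
qed

lemma symmetric_fun_append_0:
  assumes "symmetric_fun (Suc l) f"
  shows "symmetric_fun l (\<lambda>k. f (k @ [0]))"
  unfolding symmetric_fun_def
proof (intro allI impI)
  fix k :: "complex list" and p assume k: "length k = l" and p: "p permutes {..<l}"
  have "p permutes {..<Suc l}" using p by (rule permutes_subset) auto
  then have "f (permute_list p (k @ [0])) = f (k @ [0])"
    using assms k unfolding symmetric_fun_def by simp
  then show "f (permute_list p k @ [0]) = f (k @ [0])"
    using p k by (simp add: permute_list_append_singleton)
qed

lemma hom_poly_fun_append_0:
  assumes "hom_poly_fun (Suc l) d f"
  shows "hom_poly_fun l d (\<lambda>k. f (k @ [0]))"
proof -
  obtain c where c: "\<And>k. length k = Suc l \<Longrightarrow> f k = (\<Sum>v\<in>exponents (Suc l) d. c v * monomial v k)"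
    using assms unfolding hom_poly_fun_def by blast
  show ?thesis
  proof (rule hom_poly_funI)
    show "take l ` {v \<in> exponents (Suc l) d. v ! l = 0} \<subseteq> exponents l d"
    proof
      fix u assume "u \<in> take l ` {v \<in> exponents (Suc l) d. v ! l = 0}"
      then obtain v where v: "v \<in> exponents (Suc l) d" "v ! l = 0" "u = take l v" by blast
      then have "v = u @ [0]" using take_Suc_conv_app_nth[of l v] by (simp add: exponents_def)
      then show "u \<in> exponents l d" using v(1) by (simp add: exponents_def)
    qed
    fix k :: "complex list" assume "length k = l"
    then show "f (k @ [0]) = (\<Sum>u\<in>take l ` {v \<in> exponents (Suc l) d. v ! l = 0}. c (u @ [0]) * monomial u k)"
      using c[of "k @ [0]"] sum_monomial_append_0[where V = "exponents (Suc l) d" and l = l and k = k]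
      by (simp add: finite_exponents length_exponents)
  qed
qed

lemma length_le_sum_list: "0 \<notin> set v \<Longrightarrow> length v \<le> sum_list (v :: nat list)"
  by (induction v) auto

lemma map_Suc_exponents: "map Suc ` exponents l e = {v \<in> exponents l (e + l). 0 \<notin> set v}"
proof (intro equalityI subsetI)
  fix v assume "v \<in> {v \<in> exponents l (e + l). 0 \<notin> set v}"
  then have v: "v \<in> exponents l (e + l)" "0 \<notin> set v" by auto
  have "map (\<lambda>x. Suc (x - 1)) v = v" using v(2) by (induction v) auto
  then have "v = map Suc (map (\<lambda>x. x - 1) v)" "sum_list (map (\<lambda>x. x - 1) v) + length v = sum_list v"
    using sum_list_Suc[of "\<lambda>x. x - 1" v] by (simp_all add: comp_def)
  then show "v \<in> map Suc ` exponents l e"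
    using v(1) by (intro image_eqI[of _ _ "map (\<lambda>x. x - 1) v"]) (auto simp: exponents_def)
qed (use sum_list_Suc[of "\<lambda>x. x"] in \<open>auto simp: exponents_def\<close>)

context
  fixes l d :: nat and f :: "complex list \<Rightarrow> complex" and c :: "nat list \<Rightarrow> complex"
  assumes f_eq: "\<And>k. length k = l \<Longrightarrow> f k = (\<Sum>v\<in>exponents l d. c v * monomial v k)"
    and symmetric: "symmetric_fun l f"
begin

lemma coeff_permute_list:
  assumes q: "q permutes {..<l}" and v: "v \<in> exponents l d"
  shows "c (permute_list q v) = c v"
proof -
  have "(\<Sum>v\<in>exponents l d. (c (permute_list q v) - c v) * monomial v k) = 0" if k: "length k = l" for k
  proof -
    have "(\<Sum>v\<in>exponents l d. c (permute_list q v) * monomial v k) =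
        (\<Sum>v\<in>exponents l d. c v * monomial v (permute_list q k))"
    proof (rule sum_monomial_permute_list[symmetric])
      show "q permutes {..<length k}" using q k by simp
      show "permute_list q v \<in> exponents l d" "permute_list (inv q) v \<in> exponents l d"
        if "v \<in> exponents l d" for v
        using that q permutes_inv[OF q] by (simp_all add: permute_list_in_exponents)
    qed (use k in \<open>simp_all add: finite_exponents length_exponents\<close>)
    also have "\<dots> = f (permute_list q k)" using f_eq k by simp
    also have "\<dots> = f k" using symmetric q k unfolding symmetric_fun_def by blast
    finally show ?thesis using f_eq[OF k] by (simp add: left_diff_distrib sum_subtractf)
  qed
  then show ?thesis
    using monomial_independent[of "exponents l d" l "\<lambda>v. c (permute_list q v) - c v" v] v
    by (simp add: finite_exponents length_exponents)
qed

lemma coeff_eq_0_if_0_in_set: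
  assumes l: "l = Suc l'" and vanish: "\<And>k. length k = l' \<Longrightarrow> f (k @ [0]) = 0"
    and v: "v \<in> exponents l d" "0 \<in> set v"
  shows "c v = 0"
proof -
  have last_0: "c w = 0" if w: "w \<in> exponents l d" "w ! l' = 0" for w
  proof -
    let ?U = "take l' ` {w \<in> exponents l d. w ! l' = 0}"
    have "finite ?U" using finite_exponents by simp
    moreover have "\<forall>u\<in>?U. length u = l'" using l by (auto simp: length_exponents)
    moreover have "\<forall>k. length k = l' \<longrightarrow> (\<Sum>u\<in>?U. c (u @ [0]) * monomial u k) = 0"
    proof (intro allI impI)
      fix k :: "complex list" assume k: "length k = l'"
      have "(\<Sum>u\<in>?U. c (u @ [0]) * monomial u k) = (\<Sum>v\<in>exponents l d. c v * monomial v (k @ [0]))"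
        by (rule sum_monomial_append_0[symmetric]) (use k l in \<open>simp_all add: finite_exponents length_exponents\<close>)
      also have "\<dots> = f (k @ [0])" using f_eq[of "k @ [0]"] k l by simp
      finally show "(\<Sum>u\<in>?U. c (u @ [0]) * monomial u k) = 0" using vanish[OF k] by simp
    qed
    moreover have "take l' w \<in> ?U" using w by blast
    ultimately have "c (take l' w @ [0]) = 0" by (rule monomial_independent)
    moreover have "take l' w @ [0] = w"
      using w l take_Suc_conv_app_nth[of l' w] length_exponents[OF w(1)] by simp
    ultimately show ?thesis by simp
  qed
  obtain j where j: "j < l" "v ! j = 0" using v by (auto simp: in_set_conv_nth exponents_def)
  have q: "transpose j l' permutes {..<l}" using j l by (intro permutes_swap_id) auto
  then have "permute_list (transpose j l') v ! l' = 0"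
    using j l v by (simp add: permute_list_nth exponents_def)
  then show ?thesis
    using last_0 coeff_permute_list[OF q v(1)] permute_list_in_exponents[OF q v(1)] by simp
qed

context
  fixes l' :: nat
  assumes l: "l = Suc l'" and vanish: "\<And>k. length k = l' \<Longrightarrow> f (k @ [0]) = 0"
begin

lemma vanishing_symmetric_fun_eq_0:
  assumes "d < l" "length k = l"
  shows "f k = 0"
proof -
  have "0 \<in> set v" if "v \<in> exponents l d" for v
    using that assms(1) length_le_sum_list[of v] by (force simp: exponents_def)
  then show ?thesis using f_eq[OF assms(2)] coeff_eq_0_if_0_in_set[OF l vanish] by simp
qed

lemma vanishing_symmetric_fun_eq_esym_mult:
  assumes "l \<le> d"
  obtains h where "hom_poly_fun l (d - l) h" "symmetric_fun l h"
    "\<And>k. length k = l \<Longrightarrow> f k = esym l k * h k"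
proof
  define E' where "E' = exponents l (d - l)"
  let ?h = "\<lambda>k. \<Sum>u\<in>E'. c (map Suc u) * monomial u k"
  have E: "map Suc ` E' = {v \<in> exponents l d. 0 \<notin> set v}"
    unfolding E'_def map_Suc_exponents using assms by simp
  show "hom_poly_fun l (d - l) ?h" unfolding E'_def by (rule hom_poly_funI) auto
  show "symmetric_fun l ?h"
  proof (rule symmetric_fun_sum_monomial[of _ _ "d - l"])
    fix q u assume q: "q permutes {..<l}" and u: "u \<in> E'"
    then have "map Suc u \<in> exponents l d" using E by blast
    moreover have "permute_list q (map Suc u) = map Suc (permute_list q u)"
      using q u by (simp add: permute_list_map E'_def length_exponents)
    ultimately show "permute_list q u \<in> E' \<and> c (map Suc (permute_list q u)) = c (map Suc u)"
      using q u coeff_permute_list[OF q, of "map Suc u"] by (auto simp: E'_def permute_list_in_exponents)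
  qed (simp add: E'_def)
  fix k :: "complex list" assume k: "length k = l"
  have "f k = (\<Sum>v\<in>{v \<in> exponents l d. 0 \<notin> set v}. c v * monomial v k)"
    unfolding f_eq[OF k] using coeff_eq_0_if_0_in_set[OF l vanish]
    by (intro sum.mono_neutral_right) (auto simp: finite_exponents)
  also have "\<dots> = (\<Sum>u\<in>E'. c (map Suc u) * monomial (map Suc u) k)"
    unfolding E[symmetric] by (simp add: sum.reindex inj_on_def)
  also have "\<dots> = esym l k * ?h k"
    using k by (simp add: monomial_map_Suc sum_distrib_left E'_def length_exponents mult_ac)
  finally show "f k = esym l k * ?h k" .
qed

end

end


section \<open>Polynomials in the elementary symmetric functions\<close>

definition weight :: "nat list \<Rightarrow> nat" where
  "weight \<beta> = (\<Sum>j<length \<beta>. (j + 1) * \<beta> ! j)"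

definition weights :: "nat \<Rightarrow> nat \<Rightarrow> nat list set" where
  "weights l d = {\<beta>. length \<beta> = l \<and> weight \<beta> = d}"

definition esym_poly_fun :: "nat \<Rightarrow> nat \<Rightarrow> (complex list \<Rightarrow> complex) \<Rightarrow> bool" where
  "esym_poly_fun l d f \<longleftrightarrow>
     (\<exists>c. \<forall>k. length k = l \<longrightarrow> f k = (\<Sum>\<beta>\<in>weights l d. c \<beta> * epow \<beta> k))"

lemma length_weights: "\<beta> \<in> weights l d \<Longrightarrow> length \<beta> = l"
  by (simp add: weights_def)

lemma finite_weights: "finite (weights l d)"
proof (rule finite_subset[of _ "{v. set v \<subseteq> {..d} \<and> length v = l}"])
  show "weights l d \<subseteq> {v. set v \<subseteq> {..d} \<and> length v = l}"
  proof
    fix \<beta> assume \<beta>: "\<beta> \<in> weights l d"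
    have "\<beta> ! j \<le> d" if "j < length \<beta>" for j
    proof -
      have "(j + 1) * \<beta> ! j \<le> weight \<beta>" unfolding weight_def using that by (intro member_le_sum) auto
      then show ?thesis using \<beta> by (simp add: weights_def)
    qed
    then show "\<beta> \<in> {v. set v \<subseteq> {..d} \<and> length v = l}"
      using \<beta> by (auto simp: weights_def in_set_conv_nth)
  qed
qed (rule finite_lists_length_eq, simp)

lemma weight_incr_at: "i < length \<beta> \<Longrightarrow> weight (incr_at i \<beta>) = weight \<beta> + Suc i"
proof -
  assume i: "i < length \<beta>"
  have "weight (incr_at i \<beta>) = (\<Sum>j<length \<beta>. (j + 1) * \<beta> ! j + (if j = i then Suc i else 0))"
    unfolding weight_def incr_at_def by (intro sum.cong) (auto simp: nth_list_update)
  then show ?thesis unfolding sum.distrib weight_def using i by simp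
qed

lemma epow_incr_at: "i < length \<beta> \<Longrightarrow> epow (incr_at i \<beta>) k = esym (Suc i) k * epow \<beta> k"
proof -
  assume i: "i < length \<beta>"
  have "epow (incr_at i \<beta>) k = (\<Prod>j<length \<beta>. (if j = i then esym (Suc i) k else 1) * esym (j + 1) k ^ (\<beta> ! j))"
    unfolding epow_def incr_at_def by (intro prod.cong) (auto simp: nth_list_update)
  then show ?thesis unfolding prod.distrib epow_def using i by (simp add: prod.delta)
qed

lemma weight_append_0: "weight (\<beta> @ [0]) = weight \<beta>"
  unfolding weight_def by (simp add: nth_append)

lemma epow_append_0: "epow (\<beta> @ [0]) k = epow \<beta> k"
  unfolding epow_def by (simp add: nth_append)

lemma epow_at_append_0: "epow \<beta> (k @ [0]) = epow \<beta> k"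
  unfolding epow_def by (simp add: esym_append_0)

lemma epow_permute_list: "p permutes {..<length k} \<Longrightarrow> epow \<beta> (permute_list p k) = epow \<beta> k"
  unfolding epow_def by (simp add: esym_permute_list)

lemma hom_poly_fun_epow: "hom_poly_fun (length \<beta>) (weight \<beta>) (epow \<beta>)"
proof -
  have "hom_poly_fun (length \<beta>) (\<Sum>j<length \<beta>. \<beta> ! j * (j + 1)) (\<lambda>k. \<Prod>j<length \<beta>. esym (j + 1) k ^ (\<beta> ! j))"
    by (intro hom_poly_fun_prod hom_poly_fun_power hom_poly_fun_esym) simp
  then show ?thesis unfolding epow_def weight_def by (simp add: mult.commute)
qed

lemma epow_independent:
  assumes "finite B" "\<forall>\<beta>\<in>B. length \<beta> = l"
    and "\<forall>k. length k = l \<longrightarrow> (\<Sum>\<beta>\<in>B. c \<beta> * epow \<beta> k) = 0" and "\<beta> \<in> B"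
  shows "c \<beta> = 0"
proof (rule monomial_independent[OF assms(1,2) _ assms(4)], intro allI impI)
  fix y :: "complex list" assume "length y = l"
  then obtain k where k: "length k = l" "\<forall>j<l. esym (j + 1) k = y ! j" using ex_esym_eq by blast
  then have "(\<Sum>\<beta>\<in>B. c \<beta> * monomial \<beta> y) = (\<Sum>\<beta>\<in>B. c \<beta> * epow \<beta> k)"
    using assms(2) unfolding monomial_def epow_def by (intro sum.cong) auto
  then show "(\<Sum>\<beta>\<in>B. c \<beta> * monomial \<beta> y) = 0" using assms(3) k by simp
qed

lemma esym_poly_funI:
  assumes "B \<subseteq> weights l d" "\<And>k. length k = l \<Longrightarrow> f k = (\<Sum>\<beta>\<in>B. c \<beta> * epow \<beta> k)"
  shows "esym_poly_fun l d f"
proof -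
  have "f k = (\<Sum>\<beta>\<in>weights l d. (if \<beta> \<in> B then c \<beta> else 0) * epow \<beta> k)" if "length k = l" for k
    using assms(2)[OF that] sum_extend_by_zero[OF finite_weights assms(1), of c "\<lambda>\<beta>. epow \<beta> k"]
    by simp
  then show ?thesis unfolding esym_poly_fun_def
    by (intro exI[of _ "\<lambda>\<beta>. if \<beta> \<in> B then c \<beta> else 0"] allI impI)
qed

lemma esym_poly_fun_add:
  assumes "esym_poly_fun l d f" "esym_poly_fun l d h"
  shows "esym_poly_fun l d (\<lambda>k. f k + h k)"
proof -
  obtain c1 c2 where
    "\<forall>k. length k = l \<longrightarrow> f k = (\<Sum>\<beta>\<in>weights l d. c1 \<beta> * epow \<beta> k)"
    "\<forall>k. length k = l \<longrightarrow> h k = (\<Sum>\<beta>\<in>weights l d. c2 \<beta> * epow \<beta> k)"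
    using assms unfolding esym_poly_fun_def by blast
  then show ?thesis unfolding esym_poly_fun_def
    by (intro exI[of _ "\<lambda>\<beta>. c1 \<beta> + c2 \<beta>"]) (simp add: distrib_right sum.distrib)
qed

lemma esym_poly_fun_imp_hom_poly_fun:
  assumes "esym_poly_fun l d f"
  shows "hom_poly_fun l d f"
proof -
  obtain c where c: "\<forall>k. length k = l \<longrightarrow> f k = (\<Sum>\<beta>\<in>weights l d. c \<beta> * epow \<beta> k)"
    using assms unfolding esym_poly_fun_def by blast
  have "hom_poly_fun l d (\<lambda>k. \<Sum>\<beta>\<in>weights l d. c \<beta> * epow \<beta> k)"
    using hom_poly_fun_epow
    by (intro hom_poly_fun_sum hom_poly_fun_smult finite_weights) (auto simp: weights_def)
  then show ?thesis using c unfolding hom_poly_fun_def by simp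
qed

lemma esym_poly_fun_imp_symmetric_fun:
  assumes "esym_poly_fun l d f"
  shows "symmetric_fun l f"
proof -
  obtain c where "\<forall>k. length k = l \<longrightarrow> f k = (\<Sum>\<beta>\<in>weights l d. c \<beta> * epow \<beta> k)"
    using assms unfolding esym_poly_fun_def by blast
  then show ?thesis unfolding symmetric_fun_def by (simp add: epow_permute_list)
qed

lemma esym_poly_fun_append_0:
  assumes "esym_poly_fun l d f"
  obtains Q where "esym_poly_fun (Suc l) d Q" "\<And>k. length k = l \<Longrightarrow> Q (k @ [0]) = f k"
proof -
  obtain c where c: "\<forall>k. length k = l \<longrightarrow> f k = (\<Sum>\<beta>\<in>weights l d. c \<beta> * epow \<beta> k)"
    using assms unfolding esym_poly_fun_def by blast
  let ?Q = "\<lambda>k. \<Sum>\<beta>\<in>weights l d. c \<beta> * epow (\<beta> @ [0]) k"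
  show ?thesis
  proof
    have "inj_on (\<lambda>\<beta>. \<beta> @ [0 :: nat]) (weights l d)" by (rule inj_onI) simp
    then have "?Q k = (\<Sum>\<gamma>\<in>(\<lambda>\<beta>. \<beta> @ [0]) ` weights l d. c (butlast \<gamma>) * epow \<gamma> k)" for k
      by (simp add: sum.reindex)
    then show "esym_poly_fun (Suc l) d ?Q"
      by (intro esym_poly_funI) (auto simp: weights_def weight_append_0)
    show "?Q (k @ [0]) = f k" if "length k = l" for k
      using c that by (simp add: epow_append_0 epow_at_append_0)
  qed
qed

lemma Bset_subset_weights: "Bset l n \<subseteq> weights l n"
  by (auto simp: Bset_def weights_def weight_def)

lemma Bset_eq_image_incr_at:
  assumes "1 \<le> l"
  shows "Bset l (d + l) = incr_at (l - 1) ` weights l d"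
proof (intro equalityI subsetI)
  fix \<gamma> assume \<gamma>: "\<gamma> \<in> Bset l (d + l)"
  then have "\<gamma> = incr_at (l - 1) (\<gamma>[l - 1 := \<gamma> ! (l - 1) - 1])" "length \<gamma> = l"
    using assms by (auto simp: Bset_def incr_at_def)
  moreover have "weight (\<gamma>[l - 1 := \<gamma> ! (l - 1) - 1]) = d"
    using weight_incr_at[of "l - 1" "\<gamma>[l - 1 := \<gamma> ! (l - 1) - 1]"] calculation \<gamma> assms
    by (simp add: Bset_def weight_def)
  ultimately show "\<gamma> \<in> incr_at (l - 1) ` weights l d"
    by (intro image_eqI[of _ _ "\<gamma>[l - 1 := \<gamma> ! (l - 1) - 1]"]) (auto simp: weights_def)
next
  fix \<gamma> assume "\<gamma> \<in> incr_at (l - 1) ` weights l d"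
  then obtain \<beta> where "\<beta> \<in> weights l d" "\<gamma> = incr_at (l - 1) \<beta>" by blast
  then show "\<gamma> \<in> Bset l (d + l)"
    using assms weight_incr_at[of "l - 1" \<beta>]
    by (auto simp: Bset_def weights_def weight_def incr_at_def)
qed

lemma sum_Bset_eq_sum_weights:
  assumes "1 \<le> l"
  shows "(\<Sum>\<gamma>\<in>Bset l (d + l). F \<gamma>) = (\<Sum>\<beta>\<in>weights l d. F (incr_at (l - 1) \<beta>))"
proof -
  have "inj_on (incr_at (l - 1)) (weights l d)"
    by (rule inj_on_subset[OF inj_on_incr_at]) (use assms in \<open>auto simp: weights_def\<close>)
  then show ?thesis unfolding Bset_eq_image_incr_at[OF assms] by (simp add: sum.reindex)
qed


lemma esym_mult_eq_sum_Bset: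
  assumes "1 \<le> l" "esym_poly_fun l d h"
  obtains C where "\<And>k. length k = l \<Longrightarrow> esym l k * h k = (\<Sum>\<gamma>\<in>Bset l (d + l). C \<gamma> * epow \<gamma> k)"
proof -
  obtain c where c: "\<forall>k. length k = l \<longrightarrow> h k = (\<Sum>\<beta>\<in>weights l d. c \<beta> * epow \<beta> k)"
    using assms(2) unfolding esym_poly_fun_def by blast
  define C where "C \<gamma> = c (\<gamma>[l - 1 := \<gamma> ! (l - 1) - 1])" for \<gamma>
  have "esym l k * h k = (\<Sum>\<gamma>\<in>Bset l (d + l). C \<gamma> * epow \<gamma> k)" if "length k = l" for k
    unfolding sum_Bset_eq_sum_weights[OF assms(1)] c[rule_format, OF that] sum_distrib_left
    using assms(1) by (intro sum.cong) (auto simp: C_def incr_at_def epow_incr_at[unfolded incr_at_def] length_weights)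
  then show ?thesis by (rule that)
qed

lemma esym_poly_fun_mult_esym:
  assumes "1 \<le> l" "esym_poly_fun l d h"
  shows "esym_poly_fun l (d + l) (\<lambda>k. esym l k * h k)"
proof -
  obtain C where "\<And>k. length k = l \<Longrightarrow> esym l k * h k = (\<Sum>\<gamma>\<in>Bset l (d + l). C \<gamma> * epow \<gamma> k)"
    using esym_mult_eq_sum_Bset[OF assms] by blast
  then show ?thesis by (rule esym_poly_funI[OF Bset_subset_weights])
qed

lemma vanishing_symmetric_fun_cases:
  assumes "hom_poly_fun (Suc l) d f" "symmetric_fun (Suc l) f"
    and "\<And>k. length k = l \<Longrightarrow> f (k @ [0]) = 0"
  obtains (zero) "\<And>k. length k = Suc l \<Longrightarrow> f k = 0"
    | (esym_mult) h where "Suc l \<le> d" "hom_poly_fun (Suc l) (d - Suc l) h" "symmetric_fun (Suc l) h"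
      "\<And>k. length k = Suc l \<Longrightarrow> f k = esym (Suc l) k * h k"
proof -
  obtain c where c: "\<And>k. length k = Suc l \<Longrightarrow> f k = (\<Sum>v\<in>exponents (Suc l) d. c v * monomial v k)"
    using assms(1) unfolding hom_poly_fun_def by blast
  show ?thesis
  proof (cases "d < Suc l")
    case True
    then show ?thesis using zero vanishing_symmetric_fun_eq_0[OF c assms(2) refl assms(3)] by blast
  next
    case False
    then have "Suc l \<le> d" by simp
    then show ?thesis
      using esym_mult vanishing_symmetric_fun_eq_esym_mult[OF c assms(2) refl assms(3)] by blast
  qed
qed

text \<open>The fundamental theorem on symmetric polynomials, by induction on the number of variables and,
  for fixed l, on the degree: f minus a lift of f(k, 0) vanishes at k_l = 0, hence is e_l times a
  symmetric function of smaller degree.\<close>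

theorem symmetric_hom_poly_fun_imp_esym_poly_fun:
  "hom_poly_fun l d f \<Longrightarrow> symmetric_fun l f \<Longrightarrow> esym_poly_fun l d f"
proof (induction l arbitrary: d f)
  case 0
  obtain c where "\<And>k. length k = 0 \<Longrightarrow> f k = (\<Sum>v\<in>exponents 0 d. c v * monomial v k)"
    using "0.prems"(1) unfolding hom_poly_fun_def by blast
  moreover have "exponents 0 d = weights 0 d" by (auto simp: exponents_def weights_def weight_def)
  moreover have "monomial v k = epow v k" if "v \<in> weights 0 d" for v k
    using that by (simp add: weights_def monomial_def epow_def)
  ultimately show ?case unfolding esym_poly_fun_def by (intro exI[of _ c]) simp
next
  case (Suc l)
  have "\<forall>f. hom_poly_fun (Suc l) d f \<longrightarrow> symmetric_fun (Suc l) f \<longrightarrow> esym_poly_fun (Suc l) d f" for d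
  proof (induction d rule: less_induct)
    case (less d)
    show ?case
    proof (intro allI impI)
      fix f assume f: "hom_poly_fun (Suc l) d f" "symmetric_fun (Suc l) f"
      then have "esym_poly_fun l d (\<lambda>k. f (k @ [0]))"
        by (intro Suc.IH hom_poly_fun_append_0 symmetric_fun_append_0)
      then obtain Q where Q: "esym_poly_fun (Suc l) d Q" "\<And>k. length k = l \<Longrightarrow> Q (k @ [0]) = f (k @ [0])"
        using esym_poly_fun_append_0 by blast
      define R where "R k = f k - Q k" for k
      have R: "hom_poly_fun (Suc l) d R" "symmetric_fun (Suc l) R"
        unfolding R_def using f Q(1)
        by (auto intro: hom_poly_fun_diff symmetric_fun_diff esym_poly_fun_imp_hom_poly_fun
            esym_poly_fun_imp_symmetric_fun)
      have "R (k @ [0]) = 0" if "length k = l" for k using Q(2)[OF that] by (simp add: R_def)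
      then have "esym_poly_fun (Suc l) d R"
      proof (rule vanishing_symmetric_fun_cases[OF R])
        assume "\<And>k. length k = Suc l \<Longrightarrow> R k = 0"
        then show ?thesis by (intro esym_poly_funI[of "{}"]) auto
      next
        fix h assume h: "Suc l \<le> d" "hom_poly_fun (Suc l) (d - Suc l) h" "symmetric_fun (Suc l) h"
          "\<And>k. length k = Suc l \<Longrightarrow> R k = esym (Suc l) k * h k"
        then have "esym_poly_fun (Suc l) (d - Suc l + Suc l) (\<lambda>k. esym (Suc l) k * h k)"
          using less.IH[of "d - Suc l"] by (intro esym_poly_fun_mult_esym) auto
        then show ?thesis using h unfolding esym_poly_fun_def by simp
      qed
      then have "esym_poly_fun (Suc l) d (\<lambda>k. Q k + R k)" using Q(1) by (intro esym_poly_fun_add)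
      then show "esym_poly_fun (Suc l) d f" by (simp add: R_def)
    qed
  qed
  then show ?case using Suc.prems by blast
qed

lemma vanishing_symmetric_fun_eq_sum_Bset:
  assumes "hom_poly_fun (Suc l) d f" "symmetric_fun (Suc l) f"
    and "\<And>k. length k = l \<Longrightarrow> f (k @ [0]) = 0"
  obtains C where "\<And>k. length k = Suc l \<Longrightarrow> f k = (\<Sum>\<beta>\<in>Bset (Suc l) d. C \<beta> * epow \<beta> k)"
proof (rule vanishing_symmetric_fun_cases[OF assms])
  assume "\<And>k. length k = Suc l \<Longrightarrow> f k = 0"
  then show ?thesis using that[of "\<lambda>_. 0"] by simp
next
  fix h assume h: "Suc l \<le> d" "hom_poly_fun (Suc l) (d - Suc l) h" "symmetric_fun (Suc l) h"
    "\<And>k. length k = Suc l \<Longrightarrow> f k = esym (Suc l) k * h k"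
  then have "esym_poly_fun (Suc l) (d - Suc l) h" by (intro symmetric_hom_poly_fun_imp_esym_poly_fun)
  then obtain C where "\<And>k. length k = Suc l \<Longrightarrow> esym (Suc l) k * h k = (\<Sum>\<gamma>\<in>Bset (Suc l) d. C \<gamma> * epow \<gamma> k)"
    using esym_mult_eq_sum_Bset[of "Suc l" "d - Suc l" h] h(1) by auto
  then show ?thesis using that h(4) by simp
qed


section \<open>The polynomials g_beta\<close>

lemma finite_comps: "finite (comps l n)"
  by (rule finite_subset[of _ "{v. set v \<subseteq> {..n} \<and> length v = l}"])
     (auto simp: comps_def intro: finite_lists_length_eq dest: member_le_sum_list)

lemma finite_Bset: "finite (Bset l n)"
  using Bset_subset_weights finite_weights by (rule finite_subset)

lemma lhs_coeff_eq_sum_monomial: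
  "length k = l \<Longrightarrow> lhs_coeff l n k m = (\<Sum>c\<in>{c \<in> comps l n. mset c = m}. monomial c k)"
  unfolding lhs_coeff_def monomial_def comps_def by simp

lemma hom_poly_fun_lhs_coeff: "hom_poly_fun l n (\<lambda>k. lhs_coeff l n k m)"
  by (rule hom_poly_funI[where c = "\<lambda>_. 1"])
     (auto simp: lhs_coeff_eq_sum_monomial comps_def exponents_def)

lemma symmetric_fun_lhs_coeff: "symmetric_fun l (\<lambda>k. lhs_coeff l n k m)"
proof -
  have "symmetric_fun l (\<lambda>k. \<Sum>c\<in>{c \<in> comps l n. mset c = m}. 1 * monomial c k)"
    by (rule symmetric_fun_sum_monomial[of _ _ n]) (auto simp: comps_def exponents_def sum_list_permute_list)
  then show ?thesis unfolding symmetric_fun_def by (simp add: lhs_coeff_eq_sum_monomial)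
qed

lemma lhs_coeff_append_0:
  assumes "length k = l"
  shows "lhs_coeff (Suc l) n (k @ [0]) m = 0"
proof -
  have "monomial c (k @ [0]) = 0" if "c \<in> comps (Suc l) n" for c
  proof -
    have "c ! l \<in> set c" "length c = Suc l" using that by (simp_all add: comps_def)
    then have "1 \<le> c ! l" using that unfolding comps_def by blast
    then show ?thesis using \<open>length c = Suc l\<close> assms by (simp add: monomial_append_0)
  qed
  then show ?thesis using assms by (simp add: lhs_coeff_eq_sum_monomial)
qed

lemma ex_lhs_coeff_eq_sum_Bset:
  assumes "1 \<le> l"
  shows "\<exists>C. \<forall>k. length k = l \<longrightarrow> lhs_coeff l n k m = (\<Sum>\<beta>\<in>Bset l n. C \<beta> * epow \<beta> k)"
proof -
  obtain l' where l: "l = Suc l'" using assms by (cases l) auto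
  obtain C where "\<And>k. length k = Suc l' \<Longrightarrow> lhs_coeff (Suc l') n k m = (\<Sum>\<beta>\<in>Bset (Suc l') n. C \<beta> * epow \<beta> k)"
    using vanishing_symmetric_fun_eq_sum_Bset[OF hom_poly_fun_lhs_coeff symmetric_fun_lhs_coeff
        lhs_coeff_append_0] by blast
  then show ?thesis unfolding l by (intro exI[of _ C]) simp
qed

lemma sum_epow_Bset_eq_imp_eq:
  assumes "\<forall>k. length k = l \<longrightarrow> (\<Sum>\<beta>\<in>Bset l n. epow \<beta> k * a \<beta>) = (\<Sum>\<beta>\<in>Bset l n. epow \<beta> k * b \<beta>)"
    and "\<beta> \<in> Bset l n"
  shows "a \<beta> = b \<beta>"
proof -
  have "\<forall>k. length k = l \<longrightarrow> (\<Sum>\<beta>\<in>Bset l n. (a \<beta> - b \<beta>) * epow \<beta> k) = 0"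
    using assms(1) by (simp add: left_diff_distrib right_diff_distrib sum_subtractf mult.commute)
  moreover have "\<forall>\<beta>\<in>Bset l n. length \<beta> = l" by (simp add: Bset_def)
  ultimately have "a \<beta> - b \<beta> = 0"
    using epow_independent[OF finite_Bset _ _ assms(2), where c = "\<lambda>\<beta>. a \<beta> - b \<beta>"] by blast
  then show ?thesis by simp
qed

lemma gfam_ok_g:
  assumes "1 \<le> l"
  shows "gfam_ok l n (g l n)"
proof -
  have "\<exists>!G. gfam_ok l n G"
  proof (rule ex_ex1I)
    have "\<forall>m. \<exists>C. \<forall>k. length k = l \<longrightarrow> lhs_coeff l n k m = (\<Sum>\<beta>\<in>Bset l n. C \<beta> * epow \<beta> k)"
      using ex_lhs_coeff_eq_sum_Bset[OF assms] by blast
    then obtain C where "\<forall>m k. length k = l \<longrightarrow> lhs_coeff l n k m = (\<Sum>\<beta>\<in>Bset l n. C m \<beta> * epow \<beta> k)"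
      unfolding choice_iff by blast
    then have "gfam_ok l n (\<lambda>\<beta> m. if \<beta> \<in> Bset l n then C m \<beta> else 0)"
      unfolding gfam_ok_def by (auto simp: mult.commute)
    then show "\<exists>G. gfam_ok l n G" by blast
  next
    fix G1 G2 assume G: "gfam_ok l n G1" "gfam_ok l n G2"
    show "G1 = G2"
    proof (intro ext)
      fix \<beta> m
      show "G1 \<beta> m = G2 \<beta> m"
      proof (cases "\<beta> \<in> Bset l n")
        case True
        then show ?thesis
          using G by (intro sum_epow_Bset_eq_imp_eq[where a = "\<lambda>\<beta>. G1 \<beta> m" and b = "\<lambda>\<beta>. G2 \<beta> m"]) (auto simp: gfam_ok_def)
      qed (use G in \<open>simp add: gfam_ok_def\<close>)
    qed
  qed
  then have "gfam_ok l n (THE G. gfam_ok l n G)" by (rule theI')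
  moreover have "g l n = (THE G. gfam_ok l n G)" unfolding g_def by (rule ext) simp
  ultimately show ?thesis by simp
qed

lemma g_eq_0_if_not_Bset: "1 \<le> l \<Longrightarrow> \<beta> \<notin> Bset l n \<Longrightarrow> g l n \<beta> m = 0"
  using gfam_ok_g[of l n] unfolding gfam_ok_def by simp

lemma lhs_coeff_eq_sum_g:
  "1 \<le> l \<Longrightarrow> length k = l \<Longrightarrow> lhs_coeff l n k m = (\<Sum>\<beta>\<in>Bset l n. epow \<beta> k * g l n \<beta> m)"
  using gfam_ok_g[of l n] unfolding gfam_ok_def by simp

lemma g_nonzero_imp_comps:
  assumes "1 \<le> l" "g l n \<beta> m \<noteq> 0"
  shows "\<exists>c\<in>comps l n. mset c = m"
proof (rule ccontr)
  assume "\<not> (\<exists>c\<in>comps l n. mset c = m)"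
  then have "{c \<in> comps l n. mset c = m} = {}" by blast
  then have zero: "lhs_coeff l n k m = 0" for k unfolding lhs_coeff_def by (simp only: sum.empty)
  have "\<forall>k. length k = l \<longrightarrow> (\<Sum>\<beta>\<in>Bset l n. epow \<beta> k * g l n \<beta> m) = (\<Sum>\<beta>\<in>Bset l n. epow \<beta> k * 0)"
  proof (intro allI impI)
    fix k :: "complex list" assume "length k = l"
    then show "(\<Sum>\<beta>\<in>Bset l n. epow \<beta> k * g l n \<beta> m) = (\<Sum>\<beta>\<in>Bset l n. epow \<beta> k * 0)"
      using lhs_coeff_eq_sum_g[OF assms(1), of k n m] zero[of k] by simp
  qed
  then have "\<beta> \<in> Bset l n \<Longrightarrow> g l n \<beta> m = 0"
    by (rule sum_epow_Bset_eq_imp_eq[where a = "\<lambda>\<beta>. g l n \<beta> m" and b = "\<lambda>_. 0"])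
  then show False using assms g_eq_0_if_not_Bset by blast
qed

lemma deg_g: "1 \<le> l \<Longrightarrow> g l n \<beta> m \<noteq> 0 \<Longrightarrow> deg m = n"
  using g_nonzero_imp_comps[of l n \<beta> m] unfolding deg_def comps_def by (auto simp: sum_mset_sum_list)

lemma g_eq_0_if_0_in: "1 \<le> l \<Longrightarrow> 0 \<in># m \<Longrightarrow> g l n \<beta> m = 0"
  using g_nonzero_imp_comps[of l n \<beta> m] unfolding comps_def by fastforce

lemma finite_support_g: "1 \<le> l \<Longrightarrow> finite {m. g l n \<beta> m \<noteq> 0}"
proof -
  assume "1 \<le> l"
  then have "{m. g l n \<beta> m \<noteq> 0} \<subseteq> mset ` comps l n" using g_nonzero_imp_comps by blast
  then show ?thesis using finite_comps finite_subset by blast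
qed


section \<open>The derivation d on the generating series\<close>

lemma dop_sum: "finite B \<Longrightarrow> dop (\<lambda>m. \<Sum>\<beta>\<in>B. a \<beta> * F \<beta> m) m' = (\<Sum>\<beta>\<in>B. a \<beta> * dop (F \<beta>) m')"
  unfolding dop_def by (simp add: sum_distrib_left sum.swap[of _ B] mult_ac)

lemma incr_at_in_comps:
  assumes "c \<in> comps l N" "i < l"
  shows "incr_at i c \<in> comps l (Suc N)" "mset (incr_at i c) = mset c - {#c ! i#} + {#Suc (c ! i)#}"
proof -
  have "sum_list (incr_at i c) = Suc (sum_list c)"
    using assms by (simp add: incr_at_def comps_def sum_list_update)
  then show "incr_at i c \<in> comps l (Suc N)"
    using assms set_update_subset_insert[of c i] by (auto simp: comps_def incr_at_def)
  show "mset (incr_at i c) = mset c - {#c ! i#} + {#Suc (c ! i)#}"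
    using assms by (simp add: incr_at_def mset_update comps_def)
qed

lemma decr_in_comps:
  assumes "c \<in> comps l (Suc N)" "i < l" "c ! i = Suc j" "1 \<le> j"
  shows "c[i := j] \<in> comps l N" "mset (c[i := j]) = mset c - {#Suc j#} + {#j#}"
proof -
  have "sum_list (c[i := j]) = sum_list c + j - Suc j"
    using assms by (simp add: comps_def sum_list_update)
  then show "c[i := j] \<in> comps l N"
    using assms set_update_subset_insert[of c i j] by (auto simp: comps_def)
  show "mset (c[i := j]) = mset c - {#Suc j#} + {#j#}"
    using assms by (simp add: mset_update comps_def)
qed

text \<open>Raising one part of a composition of N by one: the pairs (i, c) correspond to the triples
  (j, c', i) with c' = c + e_i and j = c_i, the exponent lowered by d.\<close>

lemma bij_betw_incr_at_comps:
  "bij_betw (\<lambda>(i, c). (c ! i, incr_at i c, i))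
     ({..<l} \<times> {c \<in> comps l N. mset c = m'})
     (SIGMA j:set_mset m' - {0}. SIGMA c:{c \<in> comps l (Suc N). mset c = m' - {#j#} + {#Suc j#}}.
        {i. i < l \<and> c ! i = Suc j})"
proof (rule bij_betw_byWitness[where f' = "\<lambda>(j, c, i). (i, c[i := j])"])
  show "\<forall>a\<in>{..<l} \<times> {c \<in> comps l N. mset c = m'}.
          (\<lambda>(j, c, i). (i, c[i := j])) ((\<lambda>(i, c). (c ! i, incr_at i c, i)) a) = a"
    by (auto simp: incr_at_def comps_def)
  show "(\<lambda>(i, c). (c ! i, incr_at i c, i)) ` ({..<l} \<times> {c \<in> comps l N. mset c = m'}) \<subseteq>
          (SIGMA j:set_mset m' - {0}. SIGMA c:{c \<in> comps l (Suc N). mset c = m' - {#j#} + {#Suc j#}}.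
            {i. i < l \<and> c ! i = Suc j})"
  proof (rule image_subsetI)
    fix x assume "x \<in> {..<l} \<times> {c \<in> comps l N. mset c = m'}"
    then obtain i c where x: "x = (i, c)" "i < l" "c \<in> comps l N" "mset c = m'" by blast
    then have "c ! i \<in># m'" "length c = l" by (auto simp flip: x(4) simp: comps_def)
    moreover have "1 \<le> c ! i" using x(2,3) unfolding comps_def by auto
    ultimately show "(\<lambda>(i, c). (c ! i, incr_at i c, i)) x \<in> (SIGMA j:set_mset m' - {0}.
        SIGMA c:{c \<in> comps l (Suc N). mset c = m' - {#j#} + {#Suc j#}}. {i. i < l \<and> c ! i = Suc j})"
      using x incr_at_in_comps[OF x(3,2)] by (simp add: incr_at_def)
  qed
  show "\<forall>a\<in>SIGMA j:set_mset m' - {0}. SIGMA c:{c \<in> comps l (Suc N). mset c = m' - {#j#} + {#Suc j#}}.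
          {i. i < l \<and> c ! i = Suc j}.
          (\<lambda>(i, c). (c ! i, incr_at i c, i)) ((\<lambda>(j, c, i). (i, c[i := j])) a) = a"
    by (auto simp: incr_at_def comps_def) (metis list_update_id)
  show "(\<lambda>(j, c, i). (i, c[i := j])) `
          (SIGMA j:set_mset m' - {0}. SIGMA c:{c \<in> comps l (Suc N). mset c = m' - {#j#} + {#Suc j#}}.
            {i. i < l \<and> c ! i = Suc j}) \<subseteq> {..<l} \<times> {c \<in> comps l N. mset c = m'}"
  proof (rule image_subsetI)
    fix x assume "x \<in> (SIGMA j:set_mset m' - {0}.
        SIGMA c:{c \<in> comps l (Suc N). mset c = m' - {#j#} + {#Suc j#}}. {i. i < l \<and> c ! i = Suc j})"
    then obtain j c i where x: "x = (j, c, i)" "j \<in># m'" "j \<noteq> 0" "c \<in> comps l (Suc N)"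
      "mset c = m' - {#j#} + {#Suc j#}" "i < l" "c ! i = Suc j" by auto
    then show "(\<lambda>(j, c, i). (i, c[i := j])) x \<in> {..<l} \<times> {c \<in> comps l N. mset c = m'}"
      using decr_in_comps[OF x(4,6,7)] by auto
  qed
qed

lemma card_nth_eq: "card {i. i < length c \<and> c ! i = x} = count (mset c) x"
  by (simp add: count_mset count_list_eq_length_filter length_filter_conv_card eq_commute)

lemma dop_lhs_coeff:
  assumes k: "length k = l"
  shows "dop (\<lambda>m. lhs_coeff l (Suc N) k m) m' = esym 1 k * lhs_coeff l N k m'"
proof -
  define J where "J = set_mset m' - {0}"
  define C' where "C' j = {c \<in> comps l (Suc N). mset c = m' - {#j#} + {#Suc j#}}" for j
  define I where "I c j = {i. i < l \<and> c ! i = Suc j}" for c j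
  have fin: "finite J" "finite (C' j)" "finite (I c j)" for c j
    by (auto simp: J_def C'_def I_def finite_comps)
  have card_I: "card (I c j) = count m' (Suc j) + 1" if "c \<in> C' j" for c j
  proof -
    have "length c = l" using that by (simp add: C'_def comps_def)
    then have "card (I c j) = count (mset c) (Suc j)" unfolding I_def using card_nth_eq[of c "Suc j"] by simp
    then show ?thesis using that by (simp add: C'_def)
  qed
  have "dop (\<lambda>m. lhs_coeff l (Suc N) k m) m' = (\<Sum>j\<in>J. \<Sum>c\<in>C' j. \<Sum>i\<in>I c j. monomial c k)"
    unfolding dop_def lhs_coeff_eq_sum_monomial[OF k] J_def C'_def
    by (intro sum.cong refl) (simp add: card_I[unfolded C'_def] sum_distrib_left)
  also have "\<dots> = (\<Sum>j\<in>J. \<Sum>(c, i)\<in>(SIGMA c:C' j. I c j). monomial c k)"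
    by (intro sum.cong refl sum.Sigma) (simp_all add: fin)
  also have "\<dots> = (\<Sum>(j, c, i)\<in>(SIGMA j:J. SIGMA c:C' j. I c j). monomial c k)"
    by (rule sum.Sigma) (simp_all add: fin)
  also have "\<dots> = (\<Sum>(i, c)\<in>{..<l} \<times> {c \<in> comps l N. mset c = m'}. monomial (incr_at i c) k)"
    using bij_betw_incr_at_comps[of l N m'] unfolding J_def C'_def I_def
    by (subst sum.reindex_bij_betw[symmetric]) (auto simp: split_def)
  also have "\<dots> = (\<Sum>(i, c)\<in>{..<l} \<times> {c \<in> comps l N. mset c = m'}. k ! i * monomial c k)"
    by (intro sum.cong) (auto simp: monomial_incr_at comps_def)
  also have "\<dots> = esym 1 k * lhs_coeff l N k m'"
    unfolding esym_1 lhs_coeff_eq_sum_monomial[OF k] k sum_product sum.cartesian_product by simp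
  finally show ?thesis .
qed


lemma incr_at_0_in_Bset:
  assumes "1 \<le> l" "\<delta> \<in> Bset l N"
  shows "incr_at 0 \<delta> \<in> Bset l (Suc N)"
proof -
  have \<delta>: "\<delta> \<in> weights l N" "length \<delta> = l" "1 \<le> \<delta> ! (l - 1)"
    using assms Bset_subset_weights by (auto simp: Bset_def)
  then have "weight (incr_at 0 \<delta>) = Suc N" "1 \<le> incr_at 0 \<delta> ! (l - 1)"
    using assms(1) weight_incr_at[of 0 \<delta>] by (auto simp: weights_def incr_at_def nth_list_update)
  then show ?thesis using \<delta> assms(1) by (simp add: Bset_def weight_def)
qed

lemma decr_notin_Bset:
  assumes "\<gamma> \<in> Bset l (Suc N)" "\<gamma> \<notin> incr_at 0 ` Bset l N"
  shows "\<gamma>[0 := \<gamma> ! 0 - 1] \<notin> Bset l N"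
proof
  assume decr: "\<gamma>[0 := \<gamma> ! 0 - 1] \<in> Bset l N"
  show False
  proof (cases "\<gamma> ! 0")
    case 0
    then have "\<gamma>[0 := \<gamma> ! 0 - 1] = \<gamma>" using list_update_id[of \<gamma> 0] by simp
    then have "\<gamma> \<in> Bset l N" using decr by simp
    then show False using assms(1) by (simp add: Bset_def)
  next
    case (Suc j)
    moreover have "0 < length \<gamma>" using assms(1) by (simp add: Bset_def)
    ultimately have "incr_at 0 (\<gamma>[0 := \<gamma> ! 0 - 1]) = \<gamma>"
      using list_update_id[of \<gamma> 0] by (simp add: incr_at_def)
    then have "\<gamma> \<in> incr_at 0 ` Bset l N" using decr by (intro rev_image_eqI) auto
    then show False using assms(2) by contradiction
  qed
qed

lemma sum_Bset_incr_at_0: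
  fixes F G :: "nat list \<Rightarrow> complex"
  assumes "1 \<le> l" "\<And>\<delta>. \<delta> \<notin> Bset l N \<Longrightarrow> G \<delta> = 0"
  shows "(\<Sum>\<delta>\<in>Bset l N. F (incr_at 0 \<delta>) * G \<delta>) = (\<Sum>\<gamma>\<in>Bset l (Suc N). F \<gamma> * G (\<gamma>[0 := \<gamma> ! 0 - 1]))"
proof -
  have nonempty: "0 < length \<delta>" if "\<delta> \<in> Bset l N" for \<delta> using that by (simp add: Bset_def)
  then have "inj_on (incr_at 0) (Bset l N)"
    by (intro inj_on_subset[OF inj_on_incr_at]) auto
  moreover have "(incr_at 0 \<delta>)[0 := incr_at 0 \<delta> ! 0 - 1] = \<delta>" if "\<delta> \<in> Bset l N" for \<delta>
    using nonempty[OF that] by (simp add: incr_at_def)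
  ultimately have "(\<Sum>\<delta>\<in>Bset l N. F (incr_at 0 \<delta>) * G \<delta>) =
      (\<Sum>\<gamma>\<in>incr_at 0 ` Bset l N. F \<gamma> * G (\<gamma>[0 := \<gamma> ! 0 - 1]))"
    by (simp add: sum.reindex)
  also have "\<dots> = (\<Sum>\<gamma>\<in>Bset l (Suc N). F \<gamma> * G (\<gamma>[0 := \<gamma> ! 0 - 1]))"
  proof (rule sum.mono_neutral_left[OF finite_Bset])
    show "incr_at 0 ` Bset l N \<subseteq> Bset l (Suc N)" using incr_at_0_in_Bset[OF assms(1)] by blast
    show "\<forall>\<gamma>\<in>Bset l (Suc N) - incr_at 0 ` Bset l N. F \<gamma> * G (\<gamma>[0 := \<gamma> ! 0 - 1]) = 0"
    proof
      fix \<gamma> assume "\<gamma> \<in> Bset l (Suc N) - incr_at 0 ` Bset l N"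
      then have "\<gamma>[0 := \<gamma> ! 0 - 1] \<notin> Bset l N" by (intro decr_notin_Bset) auto
      then show "F \<gamma> * G (\<gamma>[0 := \<gamma> ! 0 - 1]) = 0" using assms(2) by simp
    qed
  qed
  finally show ?thesis .
qed

text \<open>Since d multiplies the generating series by e_1(k), comparing coefficients of e^beta(k)
  shows that d lowers beta_1 by one. If beta_1 = 0 the truncated subtraction leaves gamma unchanged,
  of weight N + 1, so the right-hand side vanishes.\<close>

lemma dop_g:
  assumes l: "1 \<le> l" and \<gamma>: "\<gamma> \<in> Bset l (Suc N)"
  shows "dop (g l (Suc N) \<gamma>) m' = g l N (\<gamma>[0 := \<gamma> ! 0 - 1]) m'"
proof (rule sum_epow_Bset_eq_imp_eq[OF _ \<gamma>], intro allI impI)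
  fix k :: "complex list" assume k: "length k = l"
  have "(\<Sum>\<gamma>\<in>Bset l (Suc N). epow \<gamma> k * dop (g l (Suc N) \<gamma>) m') = dop (\<lambda>m. lhs_coeff l (Suc N) k m) m'"
    by (simp add: dop_sum finite_Bset lhs_coeff_eq_sum_g[OF l k])
  also have "\<dots> = (\<Sum>\<delta>\<in>Bset l N. esym 1 k * epow \<delta> k * g l N \<delta> m')"
    unfolding dop_lhs_coeff[OF k] by (simp add: lhs_coeff_eq_sum_g[OF l k] sum_distrib_left mult.assoc)
  also have "\<dots> = (\<Sum>\<delta>\<in>Bset l N. epow (incr_at 0 \<delta>) k * g l N \<delta> m')"
    using l by (intro sum.cong) (auto simp: epow_incr_at Bset_def)
  also have "\<dots> = (\<Sum>\<gamma>\<in>Bset l (Suc N). epow \<gamma> k * g l N (\<gamma>[0 := \<gamma> ! 0 - 1]) m')"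
    using l g_eq_0_if_not_Bset by (intro sum_Bset_incr_at_0) auto
  finally show "(\<Sum>\<gamma>\<in>Bset l (Suc N). epow \<gamma> k * dop (g l (Suc N) \<gamma>) m') =
      (\<Sum>\<gamma>\<in>Bset l (Suc N). epow \<gamma> k * g l N (\<gamma>[0 := \<gamma> ! 0 - 1]) m')" .
qed

section \<open>The lift\<close>

lemma length_beta_shift [simp]: "length (beta_shift \<beta> i) = length \<beta>"
  by (cases \<beta>) (simp_all add: beta_shift_def)

lemma beta_shift_0: "\<beta> \<noteq> [] \<Longrightarrow> beta_shift \<beta> 0 = \<beta>"
  by (cases \<beta>) (simp_all add: beta_shift_def)

lemma beta_shift_Suc: "\<beta> \<noteq> [] \<Longrightarrow> beta_shift \<beta> (Suc i) = incr_at 0 (beta_shift \<beta> i)"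
  by (cases \<beta>) (simp_all add: beta_shift_def incr_at_def)

lemma Bi_subset_Bset: "1 \<le> l \<Longrightarrow> Bi l n i \<subseteq> Bset l n"
  unfolding Bi_def Bset_def by auto

lemma length_Bi: "1 \<le> l \<Longrightarrow> \<beta> \<in> Bi l n i \<Longrightarrow> length \<beta> = l"
  using Bi_subset_Bset[of l n i] by (auto simp: Bset_def)

lemma beta_shift_in_Bi:
  assumes l: "1 \<le> l" and \<beta>: "\<beta> \<in> Bi l n 0"
  shows "beta_shift \<beta> i \<in> Bi l (n + i) i"
proof (cases "l = 1")
  case True
  then have "\<beta> = [1]" "n = 1" using \<beta> by (auto simp: Bi_def split: if_splits)
  then show ?thesis using True by (simp add: Bi_def beta_shift_def)
next
  case False
  have "\<beta> \<noteq> []" using length_Bi[OF l \<beta>] l by auto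
  have "beta_shift \<beta> i \<in> Bset l (n + i) \<and> beta_shift \<beta> i ! 0 = i"
  proof (induction i)
    case 0
    then show ?case using \<beta> False \<open>\<beta> \<noteq> []\<close> by (simp add: beta_shift_0 Bi_def)
  next
    case (Suc i)
    then have "incr_at 0 (beta_shift \<beta> i) \<in> Bset l (n + Suc i)"
      using incr_at_0_in_Bset[OF l] by simp
    moreover have "incr_at 0 (beta_shift \<beta> i) ! 0 = Suc i"
      using Suc l by (simp add: incr_at_def Bset_def)
    ultimately show ?case by (simp add: beta_shift_Suc[OF \<open>\<beta> \<noteq> []\<close>])
  qed
  then show ?thesis using False by (simp add: Bi_def)
qed

lemma dop_g_Bi_0:
  assumes l: "1 \<le> l" and \<beta>: "\<beta> \<in> Bi l (Suc N) 0"
  shows "dop (g l (Suc N) \<beta>) m' = 0"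
proof -
  have "\<beta>[0 := \<beta> ! 0 - 1] \<notin> Bset l N"
  proof (cases "l = 1")
    case True
    then have "\<beta> = [1]" using \<beta> by (simp add: Bi_def split: if_splits)
    then show ?thesis using True by (simp add: Bset_def)
  next
    case False
    then have "\<beta> ! 0 = 0" "\<beta> \<in> Bset l (Suc N)" using \<beta> by (auto simp: Bi_def)
    moreover from this(1) have "\<beta>[0 := \<beta> ! 0 - 1] = \<beta>" using list_update_id[of \<beta> 0] by simp
    ultimately show ?thesis by (simp add: Bset_def)
  qed
  moreover have "\<beta> \<in> Bset l (Suc N)" using Bi_subset_Bset[OF l] \<beta> by blast
  ultimately show ?thesis using dop_g[OF l] g_eq_0_if_not_Bset[OF l] by simp
qed

lemma gtilde_eq:
  assumes "1 \<le> l"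
  shows "gtilde l n \<beta> m = (if n \<le> deg m then g l (deg m) (beta_shift \<beta> (deg m - n)) m else 0)"
proof -
  have "g l (n + i) (beta_shift \<beta> i) m = 0" if "i \<notin> {deg m - n}" for i
    using deg_g[OF assms, of "n + i" "beta_shift \<beta> i" m] that by fastforce
  then have "gtilde l n \<beta> m = g l (n + (deg m - n)) (beta_shift \<beta> (deg m - n)) m"
    unfolding gtilde_def by (subst suminf_finite[of "{deg m - n}"]) auto
  moreover have "g l n (beta_shift \<beta> 0) m = 0" if "deg m < n"
    using deg_g[OF assms, of n "beta_shift \<beta> 0" m] that by auto
  ultimately show ?thesis by auto
qed

lemma deg_add_Suc: "j \<in># m \<Longrightarrow> deg (m - {#j#} + {#Suc j#}) = Suc (deg m)"
proof -
  assume "j \<in># m"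
  then have "add_mset j (m - {#j#}) = m" by simp
  then have "sum_mset m = j + sum_mset (m - {#j#})" by (metis sum_mset.add_mset)
  then show ?thesis unfolding deg_def by simp
qed

lemma dop_cong_deg:
  assumes "\<And>m. deg m = Suc (deg m') \<Longrightarrow> F m = G m"
  shows "dop F m' = dop G m'"
  unfolding dop_def
proof (intro sum.cong refl)
  fix j assume "j \<in> set_mset m' - {0}"
  then have "F (m' - {#j#} + {#Suc j#}) = G (m' - {#j#} + {#Suc j#})" by (intro assms deg_add_Suc) auto
  then show "of_nat (count m' (Suc j) + 1) * F (m' - {#j#} + {#Suc j#}) =
      of_nat (count m' (Suc j) + 1) * G (m' - {#j#} + {#Suc j#})" by simp
qed

lemma dop_gtilde:
  assumes l: "1 \<le> l" and \<beta>: "\<beta> \<in> Bi l n 0"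
  shows "dop (gtilde l n \<beta>) m' = gtilde l n \<beta> m'"
proof -
  have "\<beta> \<noteq> []" using length_Bi[OF l \<beta>] l by auto
  show ?thesis
  proof (cases "n \<le> deg m'")
    case True
    define D where "D = deg m' - n"
    have "beta_shift \<beta> (Suc D) \<in> Bset l (Suc (deg m'))"
      using beta_shift_in_Bi[OF l \<beta>, of "Suc D"] Bi_subset_Bset[OF l] True by (auto simp: D_def)
    then have "dop (g l (Suc (deg m')) (beta_shift \<beta> (Suc D))) m' = g l (deg m') (beta_shift \<beta> D) m'"
      using dop_g[OF l] \<open>\<beta> \<noteq> []\<close> by (simp add: beta_shift_Suc incr_at_def)
    moreover have "dop (gtilde l n \<beta>) m' = dop (g l (Suc (deg m')) (beta_shift \<beta> (Suc D))) m'"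
      using True by (intro dop_cong_deg) (simp add: gtilde_eq[OF l] D_def Suc_diff_le)
    ultimately show ?thesis using True by (simp add: gtilde_eq[OF l] D_def)
  next
    case False
    then have "dop (gtilde l n \<beta>) m' = dop (if n = Suc (deg m') then g l n \<beta> else (\<lambda>_. 0)) m'"
      by (intro dop_cong_deg) (auto simp: gtilde_eq[OF l] beta_shift_0[OF \<open>\<beta> \<noteq> []\<close>])
    also have "\<dots> = 0"
      using dop_g_Bi_0[OF l, of \<beta> "deg m'" m'] \<beta> by (auto simp: dop_def)
    finally show ?thesis using False by (simp add: gtilde_eq[OF l])
  qed
qed

theorem proposition3p3:
  fixes l n :: nat and \<beta> :: "nat list"
  assumes "1 \<le> l" and "l \<le> n" and "\<beta> \<in> Bi l n 0"
  shows "(\<forall>i. beta_shift \<beta> i \<in> Bi l (n + i) i) \<and> is_lift n (g l n \<beta>) (gtilde l n \<beta>)"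
proof -
  obtain N where N: "n = Suc N" using assms(1,2) by (cases n) auto
  have "\<beta> \<noteq> []" using length_Bi[OF assms(1,3)] assms(1) by auto
  have "g l n \<beta> \<in> J_deg n"
    using g_eq_0_if_0_in[OF assms(1)] finite_support_g[OF assms(1)] deg_g[OF assms(1)]
      dop_g_Bi_0[OF assms(1)] assms(3) N
    by (auto simp: J_deg_def valid_series_def)
  moreover have "gtilde l n \<beta> m = g l n \<beta> m" if "deg m \<le> n" for m
    using that gtilde_eq[OF assms(1)] deg_g[OF assms(1), of n \<beta> m] beta_shift_0[OF \<open>\<beta> \<noteq> []\<close>]
    by (cases "deg m = n") auto
  moreover have "valid_series (gtilde l n \<beta>)"
    using gtilde_eq[OF assms(1)] g_eq_0_if_0_in[OF assms(1)] by (simp add: valid_series_def)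
  ultimately show ?thesis
    using beta_shift_in_Bi[OF assms(1,3)] dop_gtilde[OF assms(1,3)] N by (auto simp: is_lift_def)
qed

end
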